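(* Let $\bar u=(u_\beta)_{\beta<\alpha}$ be a densely non-increasing sequence of elements of a linear order $(U,<)$. If the range $\{u_\beta\mid\beta<\alpha\}$ of $\bar u$ is finite, then $\bar u$ is non-increasing.
   Context: A sequence $(u_\beta)_{\beta<\alpha}$ indexed by a countable ordinal is non-increasing if $\beta<\beta'<\alpha$ implies $u_\beta\ge u_{\beta'}$. It is densely non-increasing if for all $\gamma<\gamma'\le\alpha$, either $u_\beta=u_\gamma$ for all $\gamma\le\beta<\gamma'$, or there exist $\gamma\le\beta<\beta'<\gamma'$ with $u_\beta>u_{\beta'}$. *)

theory Defs
  imports Main "HOL-Library.Countable_Set"
begin

text \<open>An ordinal alpha is represented as an element of a well-ordered type;
  the sequence is indexed by the initial segment {..<alpha}.\<close>

definition non_increasing :: "'a::wellorder \<Rightarrow> ('a \<Rightarrow> 'u::linorder) \<Rightarrow> bool" where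
  "non_increasing \<alpha> u \<longleftrightarrow> (\<forall>\<beta> \<beta>'. \<beta> < \<beta>' \<and> \<beta>' < \<alpha> \<longrightarrow> u \<beta> \<ge> u \<beta>')"

definition densely_non_increasing :: "'a::wellorder \<Rightarrow> ('a \<Rightarrow> 'u::linorder) \<Rightarrow> bool" where
  "densely_non_increasing \<alpha> u \<longleftrightarrow>
     (\<forall>\<gamma> \<gamma>'. \<gamma> < \<gamma>' \<and> \<gamma>' \<le> \<alpha> \<longrightarrow>
        ((\<forall>\<beta>. \<gamma> \<le> \<beta> \<and> \<beta> < \<gamma>' \<longrightarrow> u \<beta> = u \<gamma>) \<or>
         (\<exists>\<beta> \<beta>'. \<gamma> \<le> \<beta> \<and> \<beta> < \<beta>' \<and> \<beta>' < \<gamma>' \<and> u \<beta> > u \<beta>')))"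

end

theory Submission
  imports Defs
begin

text \<open>If \<open>u\<close> is not non-increasing, take the least \<open>b\<close> with some \<open>a < b\<close> and \<open>u a < u b\<close>.
  Below \<open>b\<close> the sequence is non-increasing, so on \<open>[a, b)\<close> it reaches its (finitely attained)
  minimum at some \<open>d\<close> and stays constant on \<open>[d, b)\<close>. Dense non-increase on \<open>[d, b + 1)\<close> then
  forces \<open>u b \<le> u d \<le> u a\<close>, a contradiction.\<close>

lemma least_ascent_exists:
  fixes u :: "'a::wellorder \<Rightarrow> 'u::linorder"
  assumes "\<not> non_increasing \<alpha> u"
  obtains a b where "a < b" "b < \<alpha>" "u a < u b" "non_increasing b u"
proof -
  define ascent where "ascent b \<longleftrightarrow> b < \<alpha> \<and> (\<exists>a<b. u a < u b)" for b
  have "\<exists>b. ascent b"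
    using assms unfolding non_increasing_def ascent_def by (auto simp: not_le)
  then have b: "ascent (LEAST b. ascent b)"
    by (rule LeastI_ex)
  have "non_increasing (LEAST b. ascent b) u"
    unfolding non_increasing_def
  proof (intro allI impI)
    fix x y assume xy: "x < y \<and> y < (LEAST b. ascent b)"
    then have "\<not> ascent y"
      by (rule not_less_Least[OF conjunct2])
    with xy b show "u x \<ge> u y"
      unfolding ascent_def by (auto simp: not_le)
  qed
  with b that show thesis
    unfolding ascent_def by blast
qed

lemma non_increasing_finite_range_constant_tail:
  assumes "non_increasing b u" "a < b" "finite (u ` {a..<b})"
  obtains d where "a \<le> d" "d < b" "u d \<le> u a" "\<And>x. d \<le> x \<Longrightarrow> x < b \<Longrightarrow> u x = u d"
proof -
  have "u ` {a..<b} \<noteq> {}"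
    using assms(2) by auto
  then obtain d where d: "d \<in> {a..<b}" "u d = Min (u ` {a..<b})"
    using Min_in[OF assms(3)] by auto
  have "u d \<le> u x" if "x \<in> {a..<b}" for x
    using d assms(3) that by simp
  moreover have "u x \<le> u d" if "d \<le> x" "x < b" for x
    using assms(1) that unfolding non_increasing_def by (cases "d = x") auto
  ultimately show thesis
    using that[of d] d assms(2) by (simp add: order_antisym)
qed

lemma wellorder_successor:
  fixes b :: "'a::wellorder"
  assumes "b < \<alpha>"
  obtains g where "b < g" "g \<le> \<alpha>" "\<And>x. x < g \<Longrightarrow> x \<le> b"
proof
  show "b < (LEAST x. b < x)" "(LEAST x. b < x) \<le> \<alpha>"
    using assms by (auto intro: LeastI Least_le)
  show "x \<le> b" if "x < (LEAST x. b < x)" for x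
    using that not_less_Least by force
qed

lemma densely_non_increasing_constant_run:
  assumes "densely_non_increasing \<alpha> u" "d < b" "b < \<alpha>"
    and const: "\<And>x. d \<le> x \<Longrightarrow> x < b \<Longrightarrow> u x = u d"
  shows "u b \<le> u d"
proof -
  obtain g where g: "b < g" "g \<le> \<alpha>" "\<And>x. x < g \<Longrightarrow> x \<le> b"
    using wellorder_successor[OF assms(3)] by blast
  have "d < g"
    using assms(2) g(1) by (rule less_trans)
  with assms(1) g(2) consider
      "\<forall>x. d \<le> x \<and> x < g \<longrightarrow> u x = u d"
    | x y where "d \<le> x" "x < y" "y < g" "u x > u y"
    unfolding densely_non_increasing_def by blast
  then show ?thesis
  proof cases
    case 1
    with assms(2) g(1) have "u b = u d"
      using less_imp_le by blast
    then show ?thesis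
      by simp
  next
    case (2 x y)
    have "y \<le> b"
      using g(3) 2(3) .
    with 2(2) have "x < b"
      by simp
    with 2(1) have "u x = u d"
      by (rule const)
    have "y = b \<or> u y = u d"
      using const 2(1,2) \<open>y \<le> b\<close> by (metis less_le order.trans)
    with 2(4) \<open>u x = u d\<close> show ?thesis
      by auto
  qed
qed

theorem mainTheorem13:
  fixes \<alpha> :: "'a::wellorder" and u :: "'a \<Rightarrow> 'u::linorder"
  assumes "countable {..<\<alpha>}"
    and "densely_non_increasing \<alpha> u"
    and "finite (u ` {..<\<alpha>})"
  shows "non_increasing \<alpha> u"
proof (rule ccontr)
  assume "\<not> non_increasing \<alpha> u"
  then obtain a b where ab: "a < b" "b < \<alpha>" "u a < u b" "non_increasing b u"
    by (rule least_ascent_exists)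
  have "u ` {a..<b} \<subseteq> u ` {..<\<alpha>}"
    using ab(2) by auto
  then have "finite (u ` {a..<b})"
    using assms(3) by (rule finite_subset)
  then obtain d where d: "a \<le> d" "d < b" "u d \<le> u a"
      and const: "\<And>x. d \<le> x \<Longrightarrow> x < b \<Longrightarrow> u x = u d"
    using non_increasing_finite_range_constant_tail[OF ab(4) ab(1)] by blast
  have "u b \<le> u d"
    using densely_non_increasing_constant_run[OF assms(2) d(2) ab(2) const] .
  with d(3) ab(3) show False
    by simp
qed

end
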